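(* Let $S$ be a $1$-synchronizable system. Let $\tau\in T_0(S)$ and $a_1,\dots,a_n,b_1,\dots,b_m\in\Sigma_M$ be such that $\tau\cdot !?a_1\cdots !?a_n\in T_0(S)$, $\tau\cdot !?b_1\cdots !?b_m\in T_0(S)$, and $\mathrm{src}(a_i)\neq\mathrm{src}(b_j)$ for all $i\in\{1,\dots,n\}$, $j\in\{1,\dots,m\}$. Then for every shuffle $c_1\cdots c_{n+m}$ of the word $a_1\cdots a_n$ with the word $b_1\cdots b_m$: $\tau\cdot !?c_1\cdots !?c_{n+m}\in T_0(S)$, and $\tau\cdot !?a_1\cdots !?a_n\cdot !?b_1\cdots !?b_m\equiv_S\tau\cdot !?c_1\cdots !?c_{n+m}$.
   Context: A message set $M=(\Sigma_M,N,\mathrm{src},\mathrm{dst})$: finite set of messages, $N\ge1$ peers, $\mathrm{src}(a)\neq\mathrm{dst}(a)\in\{1,\dots,N\}$. Actions $!a$ (by peer $\mathrm{src}(a)$), $?a$ (by peer $\mathrm{dst}(a)$); traces are finite action sequences; $!?a$ abbreviates $!a\cdot?a$. For a trace $\tau$, $\pi_!(\tau)$ is the sequence of sent messages; $\mathrm{buf}_{i\to j}(\tau)$ is the word $w$ (if any) with (sent on $i\to j$) $=$ (received on $i\to j$)$\cdot w$. $\tau$ is FIFO ($k$-bounded FIFO) if for all $i,j$ and prefixes $\tau'$, $\mathrm{buf}_{i\to j}(\tau')$ is defined (and has length $\le k$); synchronous if of the form $!?a_1\cdots!?a_k$. A system $S=(P_1,\dots,P_N)$: finite automata $P_i$ (all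 states accepting) over actions of peer $i$, with one FIFO channel per ordered pair $i\neq j$. A configuration: one control state per peer and contents $w_{i,j}$ of channels; stable if all channels empty. $!a$ ($\mathrm{src}(a)=i,\mathrm{dst}(a)=j$) moves $P_i$ and appends $a$ to $w_{i,j}$; $?a$ moves $P_j$ and removes $a$ from the head of $w_{i,j}$; $c_0$ is the initial configuration. $T_k(S)$ ($k\ge1$): $k$-bounded FIFO traces $\tau$ with $c_0\xrightarrow{\tau}c$ for some $c$; $T_0(S)$: synchronous such traces; $T_\omega(S)=\bigcup_kT_k(S)$. $\tau_1\equiv_S\tau_2$ iff $\tau_1,\tau_2\in T_\omega(S)$ and there is $c$ with $c_0\xrightarrow{\tau_1}c$ and $c_0\xrightarrow{\tau_2}c$. $ST_k(S)=\{\pi_!(\tau)\mid\tau\in T_k(S)\}\cup\{(\pi_!(\tau),c)\mid c_0\xrightarrow{\tau}c,\ c\text{ stable},\ \tau\in T_k(S)\}$; $S$ is $1$-synchronizable if $ST_0(S)=ST_1(S)$. *)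

theory Defs
  imports Main
begin

record 'm msgset =
  msgs :: "'m set"
  npeers :: nat
  src :: "'m \<Rightarrow> nat"
  dst :: "'m \<Rightarrow> nat"

definition wf_msgset :: "'m msgset \<Rightarrow> bool" where
  "wf_msgset M \<longleftrightarrow> finite (msgs M) \<and> npeers M \<ge> 1 \<and>
     (\<forall>a\<in>msgs M. src M a \<noteq> dst M a \<and> src M a \<in> {1..npeers M} \<and> dst M a \<in> {1..npeers M})"

datatype 'm action = Send 'm | Recv 'm

fun amsg :: "'m action \<Rightarrow> 'm" where
  "amsg (Send a) = a" | "amsg (Recv a) = a"

fun actor :: "'m msgset \<Rightarrow> 'm action \<Rightarrow> nat" where
  "actor M (Send a) = src M a" | "actor M (Recv a) = dst M a"

text \<open>A finite automaton (all states accepting).\<close>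
record ('m, 's) peer =
  states :: "'s set"
  init :: 's
  trans :: "('s \<times> 'm action \<times> 's) set"

definition wf_peer :: "'m msgset \<Rightarrow> nat \<Rightarrow> ('m, 's) peer \<Rightarrow> bool" where
  "wf_peer M i P \<longleftrightarrow> finite (states P) \<and> init P \<in> states P \<and> finite (trans P) \<and>
     (\<forall>(q, \<alpha>, q') \<in> trans P. q \<in> states P \<and> q' \<in> states P \<and>
        amsg \<alpha> \<in> msgs M \<and> actor M \<alpha> = i)"

type_synonym ('m, 's) system = "nat \<Rightarrow> ('m, 's) peer"

definition wf_system :: "'m msgset \<Rightarrow> ('m, 's) system \<Rightarrow> bool" where
  "wf_system M S \<longleftrightarrow> (\<forall>i\<in>{1..npeers M}. wf_peer M i (S i))"

text \<open>Control state per peer, and contents of the FIFO channel (i,j) for each ordered pair.\<close>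
type_synonym ('s, 'm) config = "(nat \<Rightarrow> 's) \<times> (nat \<times> nat \<Rightarrow> 'm list)"

inductive step :: "'m msgset \<Rightarrow> ('m, 's) system \<Rightarrow> ('s, 'm) config \<Rightarrow> 'm action \<Rightarrow> ('s, 'm) config \<Rightarrow> bool"
  for M S where
  send: "i = src M a \<Longrightarrow> (q i, Send a, q') \<in> trans (S i) \<Longrightarrow>
     step M S (q, w) (Send a) (q(i := q'), w((i, dst M a) := w (i, dst M a) @ [a]))"
| recv: "j = dst M a \<Longrightarrow> (q j, Recv a, q') \<in> trans (S j) \<Longrightarrow> w (src M a, j) = a # u \<Longrightarrow>
     step M S (q, w) (Recv a) (q(j := q'), w((src M a, j) := u))"

fun run :: "'m msgset \<Rightarrow> ('m, 's) system \<Rightarrow> ('s, 'm) config \<Rightarrow> 'm action list \<Rightarrow> ('s, 'm) config \<Rightarrow> bool" where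
  "run M S c [] c' \<longleftrightarrow> c = c'"
| "run M S c (\<alpha> # \<tau>) c' \<longleftrightarrow> (\<exists>c''. step M S c \<alpha> c'' \<and> run M S c'' \<tau> c')"

definition c0 :: "('m, 's) system \<Rightarrow> ('s, 'm) config" where
  "c0 S = ((\<lambda>i. init (S i)), (\<lambda>_. []))"

definition stable :: "('s, 'm) config \<Rightarrow> bool" where
  "stable c \<longleftrightarrow> (\<forall>p. snd c p = [])"

fun sends :: "'m action list \<Rightarrow> 'm list" where
  "sends [] = []"
| "sends (Send a # \<tau>) = a # sends \<tau>"
| "sends (Recv a # \<tau>) = sends \<tau>"

fun recvs :: "'m action list \<Rightarrow> 'm list" where
  "recvs [] = []"
| "recvs (Recv a # \<tau>) = a # recvs \<tau>"
| "recvs (Send a # \<tau>) = recvs \<tau>"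

definition on_chan :: "'m msgset \<Rightarrow> nat \<Rightarrow> nat \<Rightarrow> 'm list \<Rightarrow> 'm list" where
  "on_chan M i j xs = filter (\<lambda>a. src M a = i \<and> dst M a = j) xs"

definition is_buf :: "'m msgset \<Rightarrow> nat \<Rightarrow> nat \<Rightarrow> 'm action list \<Rightarrow> 'm list \<Rightarrow> bool" where
  "is_buf M i j \<tau> w \<longleftrightarrow> on_chan M i j (sends \<tau>) = on_chan M i j (recvs \<tau>) @ w"

definition kfifo :: "'m msgset \<Rightarrow> nat \<Rightarrow> 'm action list \<Rightarrow> bool" where
  "kfifo M k \<tau> \<longleftrightarrow> (\<forall>n\<le>length \<tau>. \<forall>i j. \<exists>w. is_buf M i j (take n \<tau>) w \<and> length w \<le> k)"

text \<open>!?a abbreviation: syncw [a1,...,ak] = !?a1 ... !?ak\<close>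
definition syncw :: "'m list \<Rightarrow> 'm action list" where
  "syncw as = concat (map (\<lambda>a. [Send a, Recv a]) as)"

definition synchronous :: "'m action list \<Rightarrow> bool" where
  "synchronous \<tau> \<longleftrightarrow> (\<exists>as. \<tau> = syncw as)"

definition T :: "'m msgset \<Rightarrow> ('m, 's) system \<Rightarrow> nat \<Rightarrow> 'm action list set" where
  "T M S k = {\<tau>. (if k = 0 then synchronous \<tau> else kfifo M k \<tau>) \<and> (\<exists>c. run M S (c0 S) \<tau> c)}"

definition Tomega :: "'m msgset \<Rightarrow> ('m, 's) system \<Rightarrow> 'm action list set" where
  "Tomega M S = (\<Union>k. T M S k)"

definition sequiv :: "'m msgset \<Rightarrow> ('m, 's) system \<Rightarrow> 'm action list \<Rightarrow> 'm action list \<Rightarrow> bool" where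
  "sequiv M S \<tau>1 \<tau>2 \<longleftrightarrow> \<tau>1 \<in> Tomega M S \<and> \<tau>2 \<in> Tomega M S \<and>
     (\<exists>c. run M S (c0 S) \<tau>1 c \<and> run M S (c0 S) \<tau>2 c)"

definition ST :: "'m msgset \<Rightarrow> ('m, 's) system \<Rightarrow> nat \<Rightarrow> ('m list + ('m list \<times> ('s, 'm) config)) set" where
  "ST M S k = Inl ` (sends ` T M S k) \<union>
     {Inr (sends \<tau>, c) | \<tau> c. run M S (c0 S) \<tau> c \<and> stable c \<and> \<tau> \<in> T M S k}"

definition one_synchronizable :: "'m msgset \<Rightarrow> ('m, 's) system \<Rightarrow> bool" where
  "one_synchronizable M S \<longleftrightarrow> ST M S 0 = ST M S 1"

end

theory Submission
  imports Defs
begin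

text \<open>A synchronous trace is determined by its message sequence, and it is executable exactly
when every peer can follow its own projection. One-synchronizability is used through 1-bounded
asynchronous witnesses. Delaying the reception of a message x past exchanges sent by other peers
shows that x can be inserted in front of them; by induction on the shuffle, every shuffle of as and
bs is then executable after \<tau>. A stable witness !b !a ?a ?b (or !b !a ?b ?a) shows that swapping
two adjacent exchanges a, b with different senders cannot lose a local state of any peer other than
the sender of b, which moves forward. Bubbling the letters of bs into place therefore gives every
peer a common state after \<tau>\<cdot>as\<cdot>bs and after \<tau>\<cdot>cs: a peer sending no b by one inclusion, a peer
sending no a by the other.\<close>

section \<open>Runs as peer paths and channel contents\<close>

fun peer_path :: "('m, 's) peer \<Rightarrow> 's \<Rightarrow> 'm action list \<Rightarrow> 's \<Rightarrow> bool" where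
  "peer_path P s [] s' \<longleftrightarrow> s = s'"
| "peer_path P s (\<alpha> # w) s' \<longleftrightarrow> (\<exists>s''. (s, \<alpha>, s'') \<in> trans P \<and> peer_path P s'' w s')"

lemma peer_path_append:
  "peer_path P s (xs @ ys) s' \<longleftrightarrow> (\<exists>s''. peer_path P s xs s'' \<and> peer_path P s'' ys s')"
  by (induction xs arbitrary: s) auto

abbreviation proj :: "'m msgset \<Rightarrow> nat \<Rightarrow> 'm action list \<Rightarrow> 'm action list" where
  "proj M i \<rho> \<equiv> filter (\<lambda>\<alpha>. actor M \<alpha> = i) \<rho>"

lemma run_peer_path:
  "run M S c \<rho> c' \<Longrightarrow> peer_path (S k) (fst c k) (proj M k \<rho>) (fst c' k)"
proof (induction \<rho> arbitrary: c)
  case Nil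
  then show ?case by simp
next
  case (Cons \<alpha> \<rho>)
  then obtain c'' where step: "step M S c \<alpha> c''" and run: "run M S c'' \<rho> c'" by auto
  from step show ?case using Cons.IH[OF run] by cases auto
qed

type_synonym 'm chans = "nat \<times> nat \<Rightarrow> 'm list"

fun chan_step :: "'m msgset \<Rightarrow> 'm chans \<Rightarrow> 'm action \<Rightarrow> 'm chans option" where
  "chan_step M w (Send a) = Some (w((src M a, dst M a) := w (src M a, dst M a) @ [a]))"
| "chan_step M w (Recv a) = (case w (src M a, dst M a) of
      [] \<Rightarrow> None
    | b # u \<Rightarrow> if b = a then Some (w((src M a, dst M a) := u)) else None)"

definition chans_le1 :: "'m chans \<Rightarrow> bool" where
  "chans_le1 w \<longleftrightarrow> (\<forall>p. length (w p) \<le> 1)"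

fun chan_exec1 :: "'m msgset \<Rightarrow> 'm chans \<Rightarrow> 'm action list \<Rightarrow> 'm chans option" where
  "chan_exec1 M w [] = Some w"
| "chan_exec1 M w (\<alpha> # \<rho>) = (case chan_step M w \<alpha> of
      None \<Rightarrow> None
    | Some w' \<Rightarrow> if chans_le1 w' then chan_exec1 M w' \<rho> else None)"

lemma chan_exec1_append:
  "chan_exec1 M w (xs @ ys) = (case chan_exec1 M w xs of None \<Rightarrow> None | Some w' \<Rightarrow> chan_exec1 M w' ys)"
  by (induction xs arbitrary: w) (auto split: option.splits)

lemma chan_exec1_chans_le1: "chan_exec1 M w \<rho> = Some w' \<Longrightarrow> chans_le1 w \<Longrightarrow> chans_le1 w'"
  by (induction \<rho> arbitrary: w) (auto split: option.splits if_splits)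

lemma chan_exec1_take:
  assumes "chan_exec1 M w \<rho> = Some w'"
  obtains w'' where "chan_exec1 M w (take n \<rho>) = Some w''"
  using assms chan_exec1_append[of M w "take n \<rho>" "drop n \<rho>"] by (auto split: option.splits)

lemma sends_append [simp]: "sends (xs @ ys) = sends xs @ sends ys"
  by (induction xs rule: sends.induct) auto

lemma recvs_append [simp]: "recvs (xs @ ys) = recvs xs @ recvs ys"
  by (induction xs rule: recvs.induct) auto

lemma chan_exec1_is_buf:
  "chan_exec1 M (\<lambda>_. []) \<rho> = Some w \<Longrightarrow> is_buf M i j \<rho> (w (i, j))"
proof (induction \<rho> arbitrary: w rule: rev_induct)
  case Nil
  then show ?case by (auto simp: is_buf_def on_chan_def)
next
  case (snoc \<alpha> \<rho>)
  then obtain w0 where w0: "chan_exec1 M (\<lambda>_. []) \<rho> = Some w0" and "chan_exec1 M w0 [\<alpha>] = Some w"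
    by (auto simp: chan_exec1_append split: option.splits)
  then have "chan_step M w0 \<alpha> = Some w" by (auto split: option.splits if_splits)
  with snoc.IH[OF w0] show ?case
    by (cases \<alpha>) (auto simp: is_buf_def on_chan_def split: list.splits if_splits)
qed

lemma kfifo_1_if_chan_exec1: "chan_exec1 M (\<lambda>_. []) \<rho> = Some w \<Longrightarrow> kfifo M 1 \<rho>"
  unfolding kfifo_def
proof (intro allI impI)
  fix n i j
  assume "chan_exec1 M (\<lambda>_. []) \<rho> = Some w"
  then obtain w' where w': "chan_exec1 M (\<lambda>_. []) (take n \<rho>) = Some w'" by (rule chan_exec1_take)
  have "chans_le1 w'" using chan_exec1_chans_le1[OF w'] by (simp add: chans_le1_def)
  then show "\<exists>u. is_buf M i j (take n \<rho>) u \<and> length u \<le> 1"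
    using chan_exec1_is_buf[OF w'] unfolding chans_le1_def by blast
qed

lemma chan_step_if_step: "step M S c \<alpha> c' \<Longrightarrow> chan_step M (snd c) \<alpha> = Some (snd c')"
  by (erule step.cases) auto

lemma step_if_chan_step:
  assumes "chan_step M w \<alpha> = Some w'" and "(q (actor M \<alpha>), \<alpha>, s) \<in> trans (S (actor M \<alpha>))"
  shows "step M S (q, w) \<alpha> (q(actor M \<alpha> := s), w')"
proof (cases \<alpha>)
  case (Send a)
  then show ?thesis using assms by (auto intro: step.send)
next
  case (Recv a)
  then show ?thesis using assms by (auto intro: step.recv split: list.splits if_splits)
qed

lemma run_if_peer_paths:
  "\<forall>k. peer_path (S k) (q k) (proj M k \<rho>) (q' k) \<Longrightarrow> chan_exec1 M w \<rho> = Some w' \<Longrightarrow>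
   run M S (q, w) \<rho> (q', w')"
proof (induction \<rho> arbitrary: q w)
  case Nil
  then show ?case by simp
next
  case (Cons \<alpha> \<rho>)
  obtain w1 where "chan_step M w \<alpha> = Some w1" and "chan_exec1 M w1 \<rho> = Some w'"
    using Cons.prems(2) by (auto split: option.splits if_splits)
  moreover obtain s where "(q (actor M \<alpha>), \<alpha>, s) \<in> trans (S (actor M \<alpha>))"
    and "peer_path (S (actor M \<alpha>)) s (proj M (actor M \<alpha>) \<rho>) (q' (actor M \<alpha>))"
    using spec[OF Cons.prems(1), of "actor M \<alpha>"] by auto
  moreover have "peer_path (S k) (q k) (proj M k \<rho>) (q' k)" if "k \<noteq> actor M \<alpha>" for k
    using that spec[OF Cons.prems(1), of k] by simp
  ultimately show ?case using Cons.IH[of "q(actor M \<alpha> := s)" w1] step_if_chan_step by fastforce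
qed

section \<open>Synchronous words\<close>

lemma syncw_Nil [simp]: "syncw [] = []"
  by (simp add: syncw_def)

lemma syncw_Cons [simp]: "syncw (x # xs) = Send x # Recv x # syncw xs"
  by (simp add: syncw_def)

lemma syncw_append [simp]: "syncw (xs @ ys) = syncw xs @ syncw ys"
  by (simp add: syncw_def)

lemma sends_syncw [simp]: "sends (syncw xs) = xs"
  by (induction xs) auto

lemma chan_exec1_syncw:
  "chans_le1 w \<Longrightarrow> \<forall>y\<in>set ys. w (src M y, dst M y) = [] \<Longrightarrow> chan_exec1 M w (syncw ys) = Some w"
  by (induction ys) (auto simp: chans_le1_def fun_upd_idem)

lemma chan_exec1_empty_syncw: "chan_exec1 M (\<lambda>_. []) (syncw ys) = Some (\<lambda>_. [])"
  by (rule chan_exec1_syncw) (auto simp: chans_le1_def)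

lemma run_syncw_chans_empty:
  "run M S c (syncw xs) c' \<Longrightarrow> snd c = (\<lambda>_. []) \<Longrightarrow> snd c' = (\<lambda>_. [])"
proof (induction xs arbitrary: c)
  case Nil
  then show ?case by simp
next
  case (Cons x xs)
  then obtain c1 c2 where send: "step M S c (Send x) c1" and recv: "step M S c1 (Recv x) c2"
    and run: "run M S c2 (syncw xs) c'" by auto
  have "snd c1 = (\<lambda>_. [])((src M x, dst M x) := [x])"
    using chan_step_if_step[OF send] Cons.prems(2) by simp
  then have "snd c2 = ((\<lambda>_. [])((src M x, dst M x) := [x]))((src M x, dst M x) := [])"
    using chan_step_if_step[OF recv] by simp
  then have "snd c2 = (\<lambda>_. [])" by (simp add: fun_upd_idem)
  with Cons.IH[OF run] show ?case .
qed

definition sync_states :: "'m msgset \<Rightarrow> ('m, 's) system \<Rightarrow> nat \<Rightarrow> 'm list \<Rightarrow> 's set" where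
  "sync_states M S k xs = {s. peer_path (S k) (init (S k)) (proj M k (syncw xs)) s}"

lemma run_c0_syncw_iff:
  "run M S (c0 S) (syncw xs) c \<longleftrightarrow> snd c = (\<lambda>_. []) \<and> (\<forall>k. fst c k \<in> sync_states M S k xs)"
proof
  assume run: "run M S (c0 S) (syncw xs) c"
  show "snd c = (\<lambda>_. []) \<and> (\<forall>k. fst c k \<in> sync_states M S k xs)"
    using run_syncw_chans_empty[OF run] run_peer_path[OF run] by (simp add: c0_def sync_states_def)
next
  assume "snd c = (\<lambda>_. []) \<and> (\<forall>k. fst c k \<in> sync_states M S k xs)"
  then show "run M S (c0 S) (syncw xs) c"
    using run_if_peer_paths[OF _ chan_exec1_empty_syncw, of S "\<lambda>i. init (S i)" M xs "fst c"]
    by (cases c) (simp add: c0_def sync_states_def)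
qed

lemma syncw_in_T0_iff: "syncw xs \<in> T M S 0 \<longleftrightarrow> (\<forall>k. sync_states M S k xs \<noteq> {})"
proof
  assume "syncw xs \<in> T M S 0"
  then obtain c where "run M S (c0 S) (syncw xs) c" by (auto simp: T_def)
  then show "\<forall>k. sync_states M S k xs \<noteq> {}" by (auto simp: run_c0_syncw_iff)
next
  assume "\<forall>k. sync_states M S k xs \<noteq> {}"
  then have "\<forall>k. \<exists>s. s \<in> sync_states M S k xs" by blast
  then obtain q where "\<forall>k. q k \<in> sync_states M S k xs" by (metis choice)
  then have "run M S (c0 S) (syncw xs) (q, \<lambda>_. [])" by (simp add: run_c0_syncw_iff)
  then show "syncw xs \<in> T M S 0" by (auto simp: T_def synchronous_def)
qed

lemma T0_eq_syncw_sends: "\<tau> \<in> T M S 0 \<Longrightarrow> \<tau> = syncw (sends \<tau>)"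
  by (auto simp: T_def synchronous_def)

lemma syncw_append_in_T0D: "syncw (xs @ ys) \<in> T M S 0 \<Longrightarrow> syncw xs \<in> T M S 0"
  unfolding syncw_in_T0_iff sync_states_def by (auto simp: peer_path_append)

definition peers_enabled :: "'m msgset \<Rightarrow> ('m, 's) system \<Rightarrow> 'm action list \<Rightarrow> bool" where
  "peers_enabled M S \<rho> \<longleftrightarrow> (\<forall>k. \<exists>s. peer_path (S k) (init (S k)) (proj M k \<rho>) s)"

lemma peers_enabled_iff:
  "peers_enabled M S \<rho> \<longleftrightarrow> (\<exists>q. \<forall>k. peer_path (S k) (init (S k)) (proj M k \<rho>) (q k))"
  unfolding peers_enabled_def by (rule choice_iff)

lemma run_c0_if_peer_paths:
  assumes "\<forall>k. peer_path (S k) (init (S k)) (proj M k \<rho>) (q k)"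
    and "chan_exec1 M (\<lambda>_. []) \<rho> = Some w"
  shows "\<rho> \<in> T M S 1" and "run M S (c0 S) \<rho> (q, w)"
proof -
  show run: "run M S (c0 S) \<rho> (q, w)"
    unfolding c0_def using assms by (rule run_if_peer_paths)
  show "\<rho> \<in> T M S 1" using run kfifo_1_if_chan_exec1[OF assms(2)] by (auto simp: T_def)
qed

lemma one_sync_witness_in_T0:
  assumes "one_synchronizable M S" and "peers_enabled M S \<rho>"
    and "chan_exec1 M (\<lambda>_. []) \<rho> = Some w"
  shows "syncw (sends \<rho>) \<in> T M S 0"
proof -
  obtain q where "\<forall>k. peer_path (S k) (init (S k)) (proj M k \<rho>) (q k)"
    using assms(2) by (auto simp: peers_enabled_iff)
  then have "\<rho> \<in> T M S 1" using assms(3) by (rule run_c0_if_peer_paths)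
  then have "Inl (sends \<rho>) \<in> ST M S 1" by (simp add: ST_def)
  then have "Inl (sends \<rho>) \<in> ST M S 0" using assms(1) by (simp add: one_synchronizable_def)
  then obtain \<tau> where "\<tau> \<in> T M S 0" and "sends \<tau> = sends \<rho>" by (auto simp: ST_def)
  then show ?thesis by (metis T0_eq_syncw_sends)
qed

lemma one_sync_stable_witness_state:
  assumes "one_synchronizable M S" and "peers_enabled M S \<rho>"
    and "chan_exec1 M (\<lambda>_. []) \<rho> = Some (\<lambda>_. [])"
    and "peer_path (S i) (init (S i)) (proj M i \<rho>) s"
  shows "s \<in> sync_states M S i (sends \<rho>)"
proof -
  obtain q where paths: "\<forall>k. peer_path (S k) (init (S k)) (proj M k \<rho>) (q k)" and "q i = s"
  proof -
    obtain q where "\<forall>k. peer_path (S k) (init (S k)) (proj M k \<rho>) (q k)"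
      using assms(2) by (auto simp: peers_enabled_iff)
    then show thesis using assms(4) by (intro that[of "q(i := s)"]) auto
  qed
  have "Inr (sends \<rho>, (q, \<lambda>_. [])) \<in> ST M S 1"
    using run_c0_if_peer_paths[OF paths assms(3)] by (auto simp: ST_def stable_def)
  then have "Inr (sends \<rho>, (q, \<lambda>_. [])) \<in> ST M S 0"
    using assms(1) by (simp add: one_synchronizable_def)
  then obtain \<tau> where "\<tau> \<in> T M S 0" and "sends \<tau> = sends \<rho>"
    and "run M S (c0 S) \<tau> (q, \<lambda>_. [])" by (auto simp: ST_def)
  then have "run M S (c0 S) (syncw (sends \<rho>)) (q, \<lambda>_. [])" by (metis T0_eq_syncw_sends)
  with \<open>q i = s\<close> show ?thesis by (auto simp: run_c0_syncw_iff)
qed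

section \<open>Reordering synchronous words\<close>

lemma chan_exec1_between_syncw:
  "chan_exec1 M (\<lambda>_. []) \<sigma> = Some (\<lambda>_. []) \<Longrightarrow>
   chan_exec1 M (\<lambda>_. []) (syncw xs @ \<sigma> @ syncw ys) = Some (\<lambda>_. [])"
  by (simp only: chan_exec1_append chan_exec1_empty_syncw option.simps)

text \<open>The witness is \<open>!?t !x !?zs !y\<close>: peer \<open>src x\<close> sees \<open>t\<cdot>x\<cdot>zs\<close>, every other peer a prefix
  of \<open>t\<cdot>zs\<cdot>y\<close>, and \<open>x\<close> stays alone in its channel because no later message has its sender.\<close>

lemma syncw_insert_snoc_in_T0:
  assumes os: "one_synchronizable M S"
    and x_first: "syncw (t @ x # zs) \<in> T M S 0" and y_last: "syncw (t @ zs @ [y]) \<in> T M S 0"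
    and src_ne: "\<forall>z\<in>set (zs @ [y]). src M z \<noteq> src M x" and "src M x \<noteq> dst M x"
  shows "syncw (t @ x # zs @ [y]) \<in> T M S 0"
proof -
  define \<rho> where "\<rho> = syncw t @ Send x # syncw zs @ [Send y]"
  define w where "w = (\<lambda>_. [])((src M x, dst M x) := [x])"
  have "chan_exec1 M w (syncw zs) = Some w"
    by (rule chan_exec1_syncw) (use src_ne in \<open>auto simp: w_def chans_le1_def\<close>)
  then have "chan_exec1 M (\<lambda>_. []) \<rho> = Some (w((src M y, dst M y) := [y]))"
    using src_ne by (simp add: \<rho>_def chan_exec1_append chan_exec1_empty_syncw)
      (simp add: w_def chans_le1_def)
  moreover have "peers_enabled M S \<rho>"
    unfolding peers_enabled_def
  proof
    fix k
    show "\<exists>s. peer_path (S k) (init (S k)) (proj M k \<rho>) s"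
    proof (cases "k = src M x")
      case True
      then have "proj M k \<rho> = proj M k (syncw (t @ x # zs))"
        using assms(4,5) by (simp add: \<rho>_def)
      with x_first show ?thesis unfolding syncw_in_T0_iff sync_states_def by auto
    next
      case False
      then have "proj M k (syncw (t @ zs @ [y])) = proj M k \<rho> @ proj M k [Recv y]"
        by (simp add: \<rho>_def)
      moreover obtain s where "peer_path (S k) (init (S k)) (proj M k (syncw (t @ zs @ [y]))) s"
        using y_last unfolding syncw_in_T0_iff sync_states_def by blast
      ultimately show ?thesis by (metis peer_path_append)
    qed
  qed
  ultimately have "syncw (sends \<rho>) \<in> T M S 0" using one_sync_witness_in_T0[OF os] by blast
  then show ?thesis by (simp add: \<rho>_def)
qed

lemma syncw_insert_in_T0:
  assumes os: "one_synchronizable M S"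
    and "syncw (t @ [x]) \<in> T M S 0" and "syncw (t @ ys) \<in> T M S 0"
    and "\<forall>y\<in>set ys. src M y \<noteq> src M x" and "src M x \<noteq> dst M x"
  shows "syncw (t @ x # ys) \<in> T M S 0"
  using assms(3,4)
proof (induction ys rule: rev_induct)
  case Nil
  with assms(2) show ?case by simp
next
  case (snoc y zs)
  have "syncw (t @ zs) \<in> T M S 0"
    using syncw_append_in_T0D[of "t @ zs" "[y]"] snoc.prems(1) by (simp only: append_assoc)
  with snoc have "syncw (t @ x # zs) \<in> T M S 0" by simp
  with snoc.prems show ?case
    using syncw_insert_snoc_in_T0[OF os] assms(5) by simp
qed

lemma syncw_shuffle_in_T0:
  assumes os: "one_synchronizable M S"
  shows "syncw (t @ xs) \<in> T M S 0 \<Longrightarrow> syncw (t @ ys) \<in> T M S 0 \<Longrightarrow>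
    \<forall>x\<in>set xs. \<forall>y\<in>set ys. src M x \<noteq> src M y \<Longrightarrow> \<forall>z\<in>set xs \<union> set ys. src M z \<noteq> dst M z \<Longrightarrow>
    zs \<in> shuffles xs ys \<Longrightarrow> syncw (t @ zs) \<in> T M S 0"
proof (induction xs ys arbitrary: t zs rule: shuffles.induct)
  case (3 x xs y ys)
  from "3.prems"(5) consider (left) zs' where "zs = x # zs'" "zs' \<in> shuffles xs (y # ys)"
    | (right) zs' where "zs = y # zs'" "zs' \<in> shuffles (x # xs) ys" by auto
  then show ?case
  proof cases
    case left
    have "syncw (t @ [x]) \<in> T M S 0" using "3.prems"(1) syncw_append_in_T0D[of "t @ [x]" xs] by simp
    then have "syncw (t @ x # y # ys) \<in> T M S 0"
      by (rule syncw_insert_in_T0[OF os _ "3.prems"(2)]) (use "3.prems"(3,4) in auto)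
    then show ?thesis using "3.IH"(1)[of "t @ [x]" zs'] "3.prems" left by auto
  next
    case right
    have "syncw (t @ [y]) \<in> T M S 0" using "3.prems"(2) syncw_append_in_T0D[of "t @ [y]" ys] by simp
    then have "syncw (t @ y # x # xs) \<in> T M S 0"
      by (rule syncw_insert_in_T0[OF os _ "3.prems"(1)]) (use "3.prems"(3,4) in auto)
    then show ?thesis using "3.IH"(2)[of "t @ [y]" zs'] "3.prems" right by auto
  qed
qed auto

lemma one_sync_stable_witness_subset:
  assumes os: "one_synchronizable M S" and empty: "chan_exec1 M (\<lambda>_. []) \<rho> = Some (\<lambda>_. [])"
    and "syncw xs \<in> T M S 0" and "syncw ys \<in> T M S 0"
    and "\<forall>k. proj M k \<rho> = proj M k (syncw xs) \<or> proj M k \<rho> = proj M k (syncw ys)"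
    and proj_i: "proj M i \<rho> = proj M i (syncw xs)"
  shows "sync_states M S i xs \<subseteq> sync_states M S i (sends \<rho>)"
proof
  have enabled: "peers_enabled M S \<rho>"
    unfolding peers_enabled_def
  proof
    fix k
    have "sync_states M S k xs \<noteq> {}" and "sync_states M S k ys \<noteq> {}"
      using assms(3,4) by (simp_all add: syncw_in_T0_iff)
    moreover have "proj M k \<rho> = proj M k (syncw xs) \<or> proj M k \<rho> = proj M k (syncw ys)"
      using assms(5) by blast
    ultimately show "\<exists>s. peer_path (S k) (init (S k)) (proj M k \<rho>) s"
      by (metis all_not_in_conv mem_Collect_eq sync_states_def)
  qed
  fix s
  assume "s \<in> sync_states M S i xs"
  then have "peer_path (S i) (init (S i)) (proj M i \<rho>) s" by (simp add: sync_states_def proj_i)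
  with os enabled empty show "s \<in> sync_states M S i (sends \<rho>)" by (rule one_sync_stable_witness_state)
qed

text \<open>The witness is \<open>!?p !b !a ?a ?b !?q\<close>, seen by every peer as \<open>p\<cdot>a\<cdot>b\<cdot>q\<close>. If \<open>src b = dst a\<close>
  it is \<open>!?p !b !a ?b ?a !?q\<close> instead, seen as \<open>p\<cdot>b\<cdot>a\<cdot>q\<close> by \<open>src b\<close> and as \<open>p\<cdot>a\<cdot>b\<cdot>q\<close> by all others.\<close>

lemma sync_states_swap_subset:
  assumes os: "one_synchronizable M S"
    and ab: "syncw (p @ a # b # q) \<in> T M S 0" and ba: "syncw (p @ b # a # q) \<in> T M S 0"
    and src_ne: "src M a \<noteq> src M b" and i: "i \<noteq> dst M a \<or> i \<noteq> src M b"
  shows "sync_states M S i (p @ a # b # q) \<subseteq> sync_states M S i (p @ b # a # q)"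
proof (cases "src M b = dst M a")
  case False
  let ?\<rho> = "syncw p @ [Send b, Send a, Recv a, Recv b] @ syncw q"
  have exec: "chan_exec1 M (\<lambda>_. []) ?\<rho> = Some (\<lambda>_. [])"
    using src_ne by (intro chan_exec1_between_syncw) (simp add: chans_le1_def fun_eq_iff)
  have proj_eq: "proj M k ?\<rho> = proj M k (syncw (p @ a # b # q))" for k
    using False src_ne by auto
  have "sync_states M S i (p @ a # b # q) \<subseteq> sync_states M S i (sends ?\<rho>)"
    by (rule one_sync_stable_witness_subset[OF os exec ab ba]) (use proj_eq in blast)+
  then show ?thesis by simp
next
  case True
  let ?\<rho> = "syncw p @ [Send b, Send a, Recv b, Recv a] @ syncw q"
  have exec: "chan_exec1 M (\<lambda>_. []) ?\<rho> = Some (\<lambda>_. [])"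
    using src_ne by (intro chan_exec1_between_syncw) (simp add: chans_le1_def fun_eq_iff)
  have proj_eq: "proj M k ?\<rho> =
      (if k = src M b then proj M k (syncw (p @ b # a # q)) else proj M k (syncw (p @ a # b # q)))" for k
    using True src_ne by auto
  have "sync_states M S i (p @ a # b # q) \<subseteq> sync_states M S i (sends ?\<rho>)"
    by (rule one_sync_stable_witness_subset[OF os exec ab ba]) (use proj_eq True i in auto)
  then show ?thesis by simp
qed

lemma append_in_shuffles: "xs @ ys \<in> shuffles xs ys"
  by (induction xs) (auto intro: Cons_in_shuffles_leftI)

lemma sync_states_move_subset:
  assumes os: "one_synchronizable M S"
  shows "\<forall>zs\<in>shuffles xs (b # ys). syncw (t @ zs) \<in> T M S 0 \<Longrightarrow> \<forall>a\<in>set xs. src M a \<noteq> src M b \<Longrightarrow>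
    (i \<noteq> src M b \<longrightarrow> sync_states M S i (t @ xs @ b # ys) \<subseteq> sync_states M S i (t @ b # xs @ ys)) \<and>
    ((\<forall>a\<in>set xs. i \<noteq> src M a) \<longrightarrow>
      sync_states M S i (t @ b # xs @ ys) \<subseteq> sync_states M S i (t @ xs @ b # ys))"
proof (induction xs arbitrary: t)
  case Nil
  then show ?case by simp
next
  case (Cons a xs)
  have "\<forall>zs\<in>shuffles xs (b # ys). syncw ((t @ [a]) @ zs) \<in> T M S 0"
    using Cons.prems(1) Cons_in_shuffles_leftI by fastforce
  from Cons.IH[OF this] Cons.prems(2) have IH:
    "(i \<noteq> src M b \<longrightarrow> sync_states M S i (t @ a # xs @ b # ys) \<subseteq> sync_states M S i (t @ a # b # xs @ ys)) \<and>
    ((\<forall>a\<in>set xs. i \<noteq> src M a) \<longrightarrow>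
      sync_states M S i (t @ a # b # xs @ ys) \<subseteq> sync_states M S i (t @ a # xs @ b # ys))"
    by simp
  have "a # b # xs @ ys \<in> shuffles (a # xs) (b # ys)" and "b # a # xs @ ys \<in> shuffles (a # xs) (b # ys)"
    by (intro Cons_in_shuffles_leftI Cons_in_shuffles_rightI append_in_shuffles)+
  then have ab: "syncw (t @ a # b # xs @ ys) \<in> T M S 0" and ba: "syncw (t @ b # a # xs @ ys) \<in> T M S 0"
    using Cons.prems(1) by blast+
  have src_ne: "src M a \<noteq> src M b" using Cons.prems(2) by simp
  show ?case
  proof (intro conjI impI)
    assume i: "i \<noteq> src M b"
    then have "sync_states M S i (t @ a # b # xs @ ys) \<subseteq> sync_states M S i (t @ b # a # xs @ ys)"
      by (intro sync_states_swap_subset[OF os ab ba src_ne]) simp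
    with IH i show "sync_states M S i (t @ (a # xs) @ b # ys) \<subseteq> sync_states M S i (t @ b # (a # xs) @ ys)"
      by (simp, blast)
  next
    assume i: "\<forall>a'\<in>set (a # xs). i \<noteq> src M a'"
    then have "sync_states M S i (t @ b # a # xs @ ys) \<subseteq> sync_states M S i (t @ a # b # xs @ ys)"
      using src_ne by (intro sync_states_swap_subset[OF os ba ab]) auto
    with IH i show "sync_states M S i (t @ b # (a # xs) @ ys) \<subseteq> sync_states M S i (t @ (a # xs) @ b # ys)"
      by (simp, blast)
  qed
qed

lemma sync_states_shuffle_subset:
  assumes os: "one_synchronizable M S"
  shows "\<forall>zs\<in>shuffles xs ys. syncw (t @ zs) \<in> T M S 0 \<Longrightarrow> \<forall>x\<in>set xs. \<forall>y\<in>set ys. src M x \<noteq> src M y \<Longrightarrow>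
    zs \<in> shuffles xs ys \<Longrightarrow>
    (i \<notin> src M ` set ys \<longrightarrow> sync_states M S i (t @ xs @ ys) \<subseteq> sync_states M S i (t @ zs)) \<and>
    (i \<notin> src M ` set xs \<longrightarrow> sync_states M S i (t @ zs) \<subseteq> sync_states M S i (t @ xs @ ys))"
proof (induction xs ys arbitrary: t zs rule: shuffles.induct)
  case (3 x xs y ys)
  from "3.prems"(3) consider (left) zs' where "zs = x # zs'" "zs' \<in> shuffles xs (y # ys)"
    | (right) zs' where "zs = y # zs'" "zs' \<in> shuffles (x # xs) ys" by auto
  then show ?case
  proof cases
    case left
    have "\<forall>zs\<in>shuffles xs (y # ys). syncw ((t @ [x]) @ zs) \<in> T M S 0"
      using "3.prems"(1) Cons_in_shuffles_leftI by fastforce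
    from "3.IH"(1)[OF this _ left(2)] "3.prems"(2) left show ?thesis by simp
  next
    case right
    have "\<forall>zs\<in>shuffles (x # xs) ys. syncw ((t @ [y]) @ zs) \<in> T M S 0"
      using "3.prems"(1) Cons_in_shuffles_rightI by fastforce
    from "3.IH"(2)[OF this _ right(2)] "3.prems"(2) have IH:
      "(i \<notin> src M ` set ys \<longrightarrow>
        sync_states M S i (t @ y # x # xs @ ys) \<subseteq> sync_states M S i (t @ y # zs')) \<and>
      (i \<notin> src M ` set (x # xs) \<longrightarrow>
        sync_states M S i (t @ y # zs') \<subseteq> sync_states M S i (t @ y # x # xs @ ys))"
      by simp
    have move:
      "(i \<noteq> src M y \<longrightarrow>
        sync_states M S i (t @ (x # xs) @ y # ys) \<subseteq> sync_states M S i (t @ y # (x # xs) @ ys)) \<and>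
      ((\<forall>a\<in>set (x # xs). i \<noteq> src M a) \<longrightarrow>
        sync_states M S i (t @ y # (x # xs) @ ys) \<subseteq> sync_states M S i (t @ (x # xs) @ y # ys))"
      by (rule sync_states_move_subset[OF os "3.prems"(1)]) (use "3.prems"(2) in auto)
    show ?thesis using IH move right by auto
  qed
qed auto

lemma sequiv_syncw_if_sync_states_meet:
  assumes "syncw xs \<in> T M S 0" and "syncw ys \<in> T M S 0"
    and "\<forall>k. sync_states M S k xs \<inter> sync_states M S k ys \<noteq> {}"
  shows "sequiv M S (syncw xs) (syncw ys)"
proof -
  have "\<forall>k. \<exists>s. s \<in> sync_states M S k xs \<inter> sync_states M S k ys" using assms(3) by blast
  then obtain q where "\<forall>k. q k \<in> sync_states M S k xs \<inter> sync_states M S k ys" by (metis choice)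
  then have "run M S (c0 S) (syncw xs) (q, \<lambda>_. [])" and "run M S (c0 S) (syncw ys) (q, \<lambda>_. [])"
    by (simp_all add: run_c0_syncw_iff)
  with assms(1,2) show ?thesis unfolding sequiv_def Tomega_def by blast
qed

lemma sequiv_syncw_shuffle:
  assumes os: "one_synchronizable M S"
    and shuffles_in_T0: "\<forall>zs\<in>shuffles xs ys. syncw (t @ zs) \<in> T M S 0"
    and src_ne: "\<forall>x\<in>set xs. \<forall>y\<in>set ys. src M x \<noteq> src M y" and zs: "zs \<in> shuffles xs ys"
  shows "sequiv M S (syncw (t @ xs @ ys)) (syncw (t @ zs))"
proof -
  have xs_ys: "syncw (t @ xs @ ys) \<in> T M S 0" and "syncw (t @ zs) \<in> T M S 0"
    using shuffles_in_T0 append_in_shuffles zs by blast+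
  moreover have "sync_states M S k (t @ xs @ ys) \<inter> sync_states M S k (t @ zs) \<noteq> {}" for k
  proof -
    have "sync_states M S k (t @ xs @ ys) \<noteq> {}" and "sync_states M S k (t @ zs) \<noteq> {}"
      using calculation unfolding syncw_in_T0_iff by blast+
    moreover have "k \<notin> src M ` set ys \<or> k \<notin> src M ` set xs" using src_ne by fastforce
    ultimately show ?thesis
      using sync_states_shuffle_subset[OF os shuffles_in_T0 src_ne zs, of k] by blast
  qed
  ultimately show ?thesis by (intro sequiv_syncw_if_sync_states_meet) blast+
qed

theorem lemma4p6:
  fixes M :: "'m msgset" and S :: "('m, 's) system"
    and \<tau> :: "'m action list" and as bs cs :: "'m list"
  assumes "wf_msgset M" and "wf_system M S"
    and "one_synchronizable M S"
    and "set as \<subseteq> msgs M" and "set bs \<subseteq> msgs M"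
    and "\<tau> \<in> T M S 0"
    and "\<tau> @ syncw as \<in> T M S 0"
    and "\<tau> @ syncw bs \<in> T M S 0"
    and "\<forall>a\<in>set as. \<forall>b\<in>set bs. src M a \<noteq> src M b"
    and "cs \<in> shuffles as bs"
  shows "\<tau> @ syncw cs \<in> T M S 0 \<and> sequiv M S (\<tau> @ syncw as @ syncw bs) (\<tau> @ syncw cs)"
proof -
  define t where "t = sends \<tau>"
  have \<tau>: "\<tau> = syncw t" unfolding t_def using assms(6) by (rule T0_eq_syncw_sends)
  have "\<forall>z\<in>set as \<union> set bs. src M z \<noteq> dst M z"
    using assms(1,4,5) by (auto simp: wf_msgset_def)
  with assms(7,8) have shuffles_in_T0: "\<forall>zs\<in>shuffles as bs. syncw (t @ zs) \<in> T M S 0"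
    using syncw_shuffle_in_T0[OF assms(3), of t as bs] assms(9) by (simp add: \<tau>)
  then have "syncw (t @ cs) \<in> T M S 0" using assms(10) by blast
  moreover have "sequiv M S (syncw (t @ as @ bs)) (syncw (t @ cs))"
    using sequiv_syncw_shuffle[OF assms(3) shuffles_in_T0 assms(9,10)] .
  ultimately show ?thesis by (simp add: \<tau>)
qed

end
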